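(* Let $\mathcal{A}$ be a unital algebra over a field $F$ with $\operatorname{char}(F)\neq2$ such that $\mathcal{A}=R(\mathcal{A})$. Then $\operatorname{QJDer}(\mathcal{A})=\operatorname{Cent}(\mathcal{A})+\operatorname{JDer}(\mathcal{A})$.
   Context: $R(\mathcal{A})$ is the subalgebra of $\mathcal{A}$ generated by all idempotents of $\mathcal{A}$. $x\circ y=xy+yx$. $\operatorname{QJDer}(\mathcal{A})$: linear $f:\mathcal{A}\to\mathcal{A}$ for which there is a linear $h$ with $f(x)\circ y+x\circ f(y)=h(x\circ y)$ for all $x,y$. $\operatorname{Cent}(\mathcal{A})$: linear $f$ with $f(xy)=f(x)y=xf(y)$. $\operatorname{JDer}(\mathcal{A})$: linear $d$ with $d(x\circ y)=d(x)\circ y+x\circ d(y)$. Sums of sets of maps are sets of pointwise sums. *)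

theory Defs
  imports Main "HOL.Vector_Spaces"
begin

text \<open>An associative unital algebra over a field 'k is modelled as a type 'a of class ring_1
  together with a scalar multiplication smult making 'a a 'k-vector space such that the
  multiplication is 'k-bilinear.\<close>

definition unital_algebra :: "('k::field \<Rightarrow> 'a::ring_1 \<Rightarrow> 'a) \<Rightarrow> bool" where
  "unital_algebra smult \<longleftrightarrow> Vector_Spaces.vector_space smult \<and>
     (\<forall>c x y. smult c (x * y) = smult c x * y \<and> smult c (x * y) = x * smult c y)"

definition jprod :: "'a::ring \<Rightarrow> 'a \<Rightarrow> 'a" (infixl "\<circle>" 70) where
  "x \<circle> y = x * y + y * x"

inductive_set R_alg :: "('k::field \<Rightarrow> 'a::ring_1 \<Rightarrow> 'a) \<Rightarrow> 'a set" for smult where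
  idem: "e * e = e \<Longrightarrow> e \<in> R_alg smult"
| zero: "0 \<in> R_alg smult"
| one: "1 \<in> R_alg smult"
| add: "x \<in> R_alg smult \<Longrightarrow> y \<in> R_alg smult \<Longrightarrow> x + y \<in> R_alg smult"
| scale: "x \<in> R_alg smult \<Longrightarrow> smult c x \<in> R_alg smult"
| mult: "x \<in> R_alg smult \<Longrightarrow> y \<in> R_alg smult \<Longrightarrow> x * y \<in> R_alg smult"

definition QJDer :: "('k::field \<Rightarrow> 'a::ring_1 \<Rightarrow> 'a) \<Rightarrow> ('a \<Rightarrow> 'a) set" where
  "QJDer smult = {f. Vector_Spaces.linear smult smult f \<and>
     (\<exists>h. Vector_Spaces.linear smult smult h \<and> (\<forall>x y. f x \<circle> y + x \<circle> f y = h (x \<circle> y)))}"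

definition Cent :: "('k::field \<Rightarrow> 'a::ring_1 \<Rightarrow> 'a) \<Rightarrow> ('a \<Rightarrow> 'a) set" where
  "Cent smult = {f. Vector_Spaces.linear smult smult f \<and>
     (\<forall>x y. f (x * y) = f x * y \<and> f (x * y) = x * f y)}"

definition JDer :: "('k::field \<Rightarrow> 'a::ring_1 \<Rightarrow> 'a) \<Rightarrow> ('a \<Rightarrow> 'a) set" where
  "JDer smult = {d. Vector_Spaces.linear smult smult d \<and>
     (\<forall>x y. d (x \<circle> y) = d x \<circle> y + x \<circle> d y)}"

definition map_set_plus :: "('a \<Rightarrow> 'b::plus) set \<Rightarrow> ('a \<Rightarrow> 'b) set \<Rightarrow> ('a \<Rightarrow> 'b) set" where
  "map_set_plus S T = {(\<lambda>x. f x + g x) | f g. f \<in> S \<and> g \<in> T}"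

end

theory Submission
  imports Defs
begin

text \<open>Let \<open>f\<close> be a quasi-Jordan derivation with associated map \<open>h\<close> and put \<open>a = f 1\<close>.
  Taking \<open>y = 1\<close> gives \<open>2 h x = 2 f x + x \<circle> a\<close>, and comparing \<open>(e, e)\<close> with \<open>(e, 1)\<close> for an
  idempotent \<open>e\<close> shows, via the Peirce decomposition relative to \<open>e\<close>, that \<open>a\<close> commutes with \<open>e\<close>.
  The centraliser of \<open>a\<close> is a subalgebra, so \<open>a\<close> is central as \<open>\<A> = R(\<A>)\<close>. Then
  \<open>x \<mapsto> a x\<close> lies in the centroid, and since \<open>2\<close> is invertible \<open>h x = f x + a x\<close>, which
  makes \<open>f - a \<cdot>\<close> a Jordan derivation. Conversely every centroid element \<open>c\<close> satisfies the
  defining identity with \<open>h = 2 c\<close> and every Jordan derivation \<open>d\<close> with \<open>h = d\<close>.\<close>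

lemma (in vector_space) double_cancel:
  fixes x y :: 'b
  assumes "(2::'a) \<noteq> 0" and "x + x = y + y"
  shows "x = y"
proof -
  have "scale 2 (x - y) = (x - y) + (x - y)"
    by (metis one_add_one scale_left_distrib scale_one)
  also have "\<dots> = 0"
    using assms(2) by (simp add: algebra_simps)
  finally show ?thesis
    using assms(1) by simp
qed

lemma commute_idempotent_if_jprod_eq:
  fixes e u a :: "'a::ring_1"
  assumes idem: "e * e = e"
    and eq: "u \<circle> e + e \<circle> u = u \<circle> 1 + e \<circle> a"
  shows "a * e = e * a"
proof -
  have idem': "e * (e * z) = e * z" for z
    using idem by (metis mult.assoc)
  have eq': "u*e + e*u + (u*e + e*u) = u + u + (e*a + a*e)"
    using eq by (simp add: jprod_def algebra_simps)
  \<comment> \<open>compress both sides of \<open>eq'\<close> to the Peirce components \<open>e \<A> (1 - e)\<close> and \<open>(1 - e) \<A> e\<close>\<close>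
  have "e * (u*e + e*u + (u*e + e*u)) * (1 - e) = (e*u - e*u*e) + (e*u - e*u*e)"
    and "e * (u + u + (e*a + a*e)) * (1 - e) = (e*u - e*u*e) + (e*u - e*u*e) + (e*a - e*a*e)"
    by (simp_all add: algebra_simps idem idem')
  then have left: "e*a = e*a*e"
    using eq' by (metis add_cancel_right_right eq_iff_diff_eq_0)
  have "(1 - e) * (u*e + e*u + (u*e + e*u)) * e = (u*e - e*u*e) + (u*e - e*u*e)"
    and "(1 - e) * (u + u + (e*a + a*e)) * e = (u*e - e*u*e) + (u*e - e*u*e) + (a*e - e*a*e)"
    by (simp_all add: algebra_simps idem idem')
  then have right: "a*e = e*a*e"
    using eq' by (metis add_cancel_right_right eq_iff_diff_eq_0)
  show ?thesis
    using left right by simp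
qed

lemma R_alg_commute:
  fixes smult :: "'k::field \<Rightarrow> 'a::ring_1 \<Rightarrow> 'a"
  assumes "unital_algebra smult"
    and idem_commute: "\<And>e. e * e = e \<Longrightarrow> a * e = e * a"
    and "x \<in> R_alg smult"
  shows "a * x = x * a"
  using assms(3)
proof induct
  case (idem e)
  then show ?case by (rule idem_commute)
next
  case (add x y)
  then show ?case by (simp add: algebra_simps)
next
  case (scale x c)
  then show ?case
    using assms(1) unfolding unital_algebra_def by metis
next
  case (mult x y)
  then show ?case by (metis mult.assoc)
qed simp_all

lemma linear_left_mult:
  fixes smult :: "'k::field \<Rightarrow> 'a::ring_1 \<Rightarrow> 'a"
  assumes "unital_algebra smult"
  shows "Vector_Spaces.linear smult smult (\<lambda>x. a * x)"
proof -
  have "a * smult c x = smult c (a * x)" for c x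
    using assms unfolding unital_algebra_def by metis
  then show ?thesis
    using assms unfolding unital_algebra_def linear_iff by (simp add: distrib_left)
qed

lemma left_mult_central_in_Cent:
  fixes smult :: "'k::field \<Rightarrow> 'a::ring_1 \<Rightarrow> 'a"
  assumes "unital_algebra smult" and "\<And>x. a * x = x * a"
  shows "(\<lambda>x. a * x) \<in> Cent smult"
proof -
  have "a * (x * y) = a * x * y" and "a * (x * y) = x * (a * y)" for x y
    using assms(2) by (metis mult.assoc)+
  then show ?thesis
    using linear_left_mult[OF assms(1)] unfolding Cent_def by blast
qed

lemma JDer_subset_QJDer: "JDer smult \<subseteq> QJDer smult"
  unfolding JDer_def QJDer_def by auto

lemma Cent_subset_QJDer:
  fixes smult :: "'k::field \<Rightarrow> 'a::ring_1 \<Rightarrow> 'a"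
  assumes vs: "Vector_Spaces.vector_space smult"
  shows "Cent smult \<subseteq> QJDer smult"
proof
  fix c assume "c \<in> Cent smult"
  then have lc: "Vector_Spaces.linear smult smult c"
    and mult: "\<And>x y. c (x * y) = c x * y" "\<And>x y. c (x * y) = x * c y"
    unfolding Cent_def by blast+
  have add: "c (x + y) = c x + c y" for x y
    using lc unfolding linear_iff by blast
  have "Vector_Spaces.linear smult smult (\<lambda>z. c z + c z)"
    using vector_space_pair.linear_compose_add[OF vector_space_pair.intro[OF vs vs] lc lc] .
  moreover have "c x \<circle> y + x \<circle> c y = c (x \<circle> y) + c (x \<circle> y)" for x y
    unfolding jprod_def add by (simp add: algebra_simps) (metis mult add.commute add.left_commute)
  ultimately show "c \<in> QJDer smult"
    unfolding QJDer_def using lc by blast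
qed

lemma QJDer_add:
  fixes smult :: "'k::field \<Rightarrow> 'a::ring_1 \<Rightarrow> 'a"
  assumes vs: "Vector_Spaces.vector_space smult"
    and "f \<in> QJDer smult" and "g \<in> QJDer smult"
  shows "(\<lambda>x. f x + g x) \<in> QJDer smult"
proof -
  interpret vector_space_pair smult smult
    by (rule vector_space_pair.intro[OF vs vs])
  obtain hf hg where
    lf: "Vector_Spaces.linear smult smult f" and lhf: "Vector_Spaces.linear smult smult hf"
    and Hf: "\<And>x y. f x \<circle> y + x \<circle> f y = hf (x \<circle> y)"
    and lg: "Vector_Spaces.linear smult smult g" and lhg: "Vector_Spaces.linear smult smult hg"
    and Hg: "\<And>x y. g x \<circle> y + x \<circle> g y = hg (x \<circle> y)"
    using assms(2,3) unfolding QJDer_def by blast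
  have "(f x + g x) \<circle> y + x \<circle> (f y + g y) = (f x \<circle> y + x \<circle> f y) + (g x \<circle> y + x \<circle> g y)"
    for x y by (simp add: jprod_def algebra_simps)
  then have "(f x + g x) \<circle> y + x \<circle> (f y + g y) = hf (x \<circle> y) + hg (x \<circle> y)" for x y
    by (simp only: Hf Hg)
  then show ?thesis
    unfolding QJDer_def using linear_compose_add[OF lf lg] linear_compose_add[OF lhf lhg] by blast
qed

lemma map_set_plus_Cent_JDer_subset_QJDer:
  fixes smult :: "'k::field \<Rightarrow> 'a::ring_1 \<Rightarrow> 'a"
  assumes "Vector_Spaces.vector_space smult"
  shows "map_set_plus (Cent smult) (JDer smult) \<subseteq> QJDer smult"
  using QJDer_add[OF assms] Cent_subset_QJDer[OF assms] JDer_subset_QJDer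
  unfolding map_set_plus_def by blast

lemma QJDer_unit_commute_idempotent:
  assumes "f \<in> QJDer smult" and idem: "e * e = e"
  shows "f 1 * e = e * f 1"
proof -
  obtain h where H: "\<And>x y. f x \<circle> y + x \<circle> f y = h (x \<circle> y)"
    using assms(1) unfolding QJDer_def by blast
  have "e \<circle> e = e \<circle> 1"
    using idem by (simp add: jprod_def)
  then have "f e \<circle> e + e \<circle> f e = f e \<circle> 1 + e \<circle> f 1"
    by (simp only: H)
  then show ?thesis
    using idem commute_idempotent_if_jprod_eq by blast
qed

lemma QJDer_unit_central:
  fixes smult :: "'k::field \<Rightarrow> 'a::ring_1 \<Rightarrow> 'a"
  assumes "unital_algebra smult" and "R_alg smult = UNIV" and "f \<in> QJDer smult"
  shows "f 1 * x = x * f 1"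
  using R_alg_commute[OF assms(1) QJDer_unit_commute_idempotent[OF assms(3)]] assms(2)
  by blast

lemma QJDer_minus_unit_mult_in_JDer:
  fixes smult :: "'k::field \<Rightarrow> 'a::ring_1 \<Rightarrow> 'a"
  assumes alg: "unital_algebra smult" and two: "(2::'k) \<noteq> 0"
    and "f \<in> QJDer smult" and central: "\<And>x. f 1 * x = x * f 1"
  shows "(\<lambda>x. f x - f 1 * x) \<in> JDer smult"
proof -
  have vs: "Vector_Spaces.vector_space smult"
    using alg unfolding unital_algebra_def by blast
  obtain h where lf: "Vector_Spaces.linear smult smult f"
    and lh: "Vector_Spaces.linear smult smult h"
    and H: "\<And>x y. f x \<circle> y + x \<circle> f y = h (x \<circle> y)"
    using assms(3) unfolding QJDer_def by blast
  have h_eq: "h z = f z + f 1 * z" for z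
  proof (rule vector_space.double_cancel[OF vs two])
    have "h (z + z) = h z + h z"
      using lh unfolding linear_iff by blast
    then show "h z + h z = f z + f 1 * z + (f z + f 1 * z)"
      using H[of z 1] by (simp add: jprod_def central algebra_simps)
  qed
  have "Vector_Spaces.linear smult smult (\<lambda>x. f x - f 1 * x)"
    by (rule vector_space_pair.linear_compose_sub[OF vector_space_pair.intro[OF vs vs]
          lf linear_left_mult[OF alg]])
  moreover have "f (x \<circle> y) - f 1 * (x \<circle> y)
      = (f x - f 1 * x) \<circle> y + x \<circle> (f y - f 1 * y)" for x y
  proof -
    have "f (x \<circle> y) - f 1 * (x \<circle> y) = (f x \<circle> y + x \<circle> f y) - (f 1 * (x \<circle> y) + f 1 * (x \<circle> y))"
      unfolding H h_eq by simp
    also have "\<dots> = (f x - f 1 * x) \<circle> y + x \<circle> (f y - f 1 * y)"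
      unfolding jprod_def by (simp add: algebra_simps) (metis central mult.assoc)
    finally show ?thesis .
  qed
  ultimately show ?thesis
    unfolding JDer_def by simp
qed

theorem proposition4p2:
  fixes smult :: "'k::field \<Rightarrow> 'a::ring_1 \<Rightarrow> 'a"
  assumes "unital_algebra smult"
    and "(2::'k) \<noteq> 0"
    and "R_alg smult = UNIV"
  shows "QJDer smult = map_set_plus (Cent smult) (JDer smult)"
proof
  show "QJDer smult \<subseteq> map_set_plus (Cent smult) (JDer smult)"
  proof
    fix f assume f: "f \<in> QJDer smult"
    have central: "\<And>x. f 1 * x = x * f 1"
      using QJDer_unit_central[OF assms(1,3) f] .
    have "(\<lambda>x. f 1 * x) \<in> Cent smult"
      using left_mult_central_in_Cent[OF assms(1) central] .
    moreover have "(\<lambda>x. f x - f 1 * x) \<in> JDer smult"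
      using QJDer_minus_unit_mult_in_JDer[OF assms(1,2) f central] .
    ultimately show "f \<in> map_set_plus (Cent smult) (JDer smult)"
      unfolding map_set_plus_def by force
  qed
  show "map_set_plus (Cent smult) (JDer smult) \<subseteq> QJDer smult"
    using map_set_plus_Cent_JDer_subset_QJDer assms(1) unfolding unital_algebra_def by blast
qed

end
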